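(* Let $d\ge0$ and let $L:\mathbb{C}_{2d+2}[z,\overline z]\to\mathbb{C}$ be a real linear functional which is non-negative on all real squares, i.e. $L(|f|^2)\ge0$ for all $f\in\mathbb{C}_{d+1}[z,\overline z]$, and which is strictly positive on hermitian squares of bidegree at most $(d,d)$, i.e. $L(|p(z)|^2)>0$ for every nonzero $p\in\mathbb{C}_d[z]$. Let $M=\pi_dM_z|_{A_d}$ and let $\sigma_M(p,q)=\|p\|_L^2+\|Mq\|_L^2+2\Re\langle Mp,q\rangle_L$ on $A_d\oplus A_d$. The following are equivalent: (a) there exist an integer $N\le d+1$, points $a_1,\dots,a_N\in\mathbb{C}$ and weights $c_1,\dots,c_N>0$ such that $$L\big(p(z)\overline{q(z)}\big)=\sum_{k=1}^N c_k\,p(a_k)\overline{q(a_k)}$$ for all $p,q\in\mathbb{C}_{d+1}[z]$ with $\deg p+\deg q\le 2d+1$; (b) the hermitian form $\sigma_M$ is positive semidefinite on all of $A_d\oplus A_d$ (i.e. $\sigma_M$ has no negative eigenvalue, so its only possible non-positive eigenvalue is $0$).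
   Context: Notation: $\mathbb{C}_n[z]$ denotes complex polynomials in $z$ of degree $\le n$; $\mathbb{C}_n[z,\overline z]$ denotes polynomials in $z,\overline z$ of total degree $\le n$. $L$ real means $L(\overline p)=\overline{L(p)}$. $\langle p,q\rangle_L=L(p\overline q)$ and $\|p\|_L^2=L(|p|^2)$. Under the strict positivity hypothesis, $A_d=\mathbb{C}_d[z]$ is a $(d+1)$-dimensional Hilbert space with inner product $\langle\cdot,\cdot\rangle_L$; $A_{d+1}$ is the Hilbert space obtained from $\mathbb{C}_{d+1}[z]$ with the form $\langle\cdot,\cdot\rangle_L$ after quotienting by null vectors, containing $A_d$; $\pi_d$ is the orthogonal projection of $A_{d+1}$ onto $A_d$; $M_z:A_d\to A_{d+1}$ is induced by $p\mapsto zp$, so $M$ is the compression of multiplication by $z$ to $\mathbb{C}_d[z]$. *)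

theory Defs
  imports Complex_Main "HOL-Computational_Algebra.Polynomial"
begin

text \<open>Polynomials in z and conj z are represented by coefficient arrays:
  f i j is the coefficient of the monomial z^i (conj z)^j.\<close>
type_synonym bpoly = "nat \<Rightarrow> nat \<Rightarrow> complex"

definition in_bdeg :: "nat \<Rightarrow> bpoly \<Rightarrow> bool" where
  "in_bdeg n f \<longleftrightarrow> (\<forall>i j. f i j \<noteq> 0 \<longrightarrow> i + j \<le> n)"

definition badd :: "bpoly \<Rightarrow> bpoly \<Rightarrow> bpoly" where
  "badd f g = (\<lambda>i j. f i j + g i j)"

definition bscale :: "complex \<Rightarrow> bpoly \<Rightarrow> bpoly" where
  "bscale c f = (\<lambda>i j. c * f i j)"

text \<open>complex conjugate of the polynomial: conj(z^i conj z^j) = z^j conj z^i\<close>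
definition bconj :: "bpoly \<Rightarrow> bpoly" where
  "bconj f = (\<lambda>i j. cnj (f j i))"

definition bmult :: "bpoly \<Rightarrow> bpoly \<Rightarrow> bpoly" where
  "bmult f g = (\<lambda>i j. \<Sum>a\<le>i. \<Sum>b\<le>j. f a b * g (i - a) (j - b))"

definition bemb :: "complex poly \<Rightarrow> bpoly" where
  "bemb p = (\<lambda>i j. if j = 0 then coeff p i else 0)"

definition hprod :: "complex poly \<Rightarrow> complex poly \<Rightarrow> bpoly" where
  "hprod p q = bmult (bemb p) (bconj (bemb q))"

definition lin_functional :: "nat \<Rightarrow> (bpoly \<Rightarrow> complex) \<Rightarrow> bool" where
  "lin_functional n L \<longleftrightarrow>
     (\<forall>f g. in_bdeg n f \<longrightarrow> in_bdeg n g \<longrightarrow> L (badd f g) = L f + L g) \<and>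
     (\<forall>c f. in_bdeg n f \<longrightarrow> L (bscale c f) = c * L f)"

definition real_functional :: "nat \<Rightarrow> (bpoly \<Rightarrow> complex) \<Rightarrow> bool" where
  "real_functional n L \<longleftrightarrow> (\<forall>f. in_bdeg n f \<longrightarrow> L (bconj f) = cnj (L f))"

definition ipL :: "(bpoly \<Rightarrow> complex) \<Rightarrow> complex poly \<Rightarrow> complex poly \<Rightarrow> complex" where
  "ipL L p q = L (hprod p q)"

definition projL :: "(bpoly \<Rightarrow> complex) \<Rightarrow> nat \<Rightarrow> complex poly \<Rightarrow> complex poly" where
  "projL L d f = (THE q. degree q \<le> d \<and> (\<forall>r. degree r \<le> d \<longrightarrow> ipL L (f - q) r = 0))"

definition compM :: "(bpoly \<Rightarrow> complex) \<Rightarrow> nat \<Rightarrow> complex poly \<Rightarrow> complex poly" where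
  "compM L d p = projL L d (pCons 0 p)"

definition sigmaM :: "(bpoly \<Rightarrow> complex) \<Rightarrow> nat \<Rightarrow> complex poly \<Rightarrow> complex poly \<Rightarrow> real" where
  "sigmaM L d p q = Re (ipL L p p) + Re (ipL L (compM L d q) (compM L d q))
                    + 2 * Re (ipL L (compM L d p) q)"

end

theory Submission
  imports Defs "HOL-Computational_Algebra.Fundamental_Theorem_Algebra"
begin

text \<open>If \<open>L\<close> is a quadrature rule with nodes \<open>a\<^sub>k\<close> and weights \<open>c\<^sub>k\<close>, then \<open>M\<close> acts
  at the nodes as multiplication by \<open>a\<^sub>k\<close>, and
  \<open>\<sigma>\<^sub>M(p, q) = \<Sum>\<^sub>k c\<^sub>k |p(a\<^sub>k) + conj(a\<^sub>k) q(a\<^sub>k)|\<^sup>2 \<ge> 0\<close>.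

  Conversely, let \<open>P\<close> be the monic polynomial of degree \<open>d + 1\<close> orthogonal to \<open>A\<^sub>d\<close>.
  For every root \<open>a\<close> of \<open>P\<close> the cofactor \<open>v = P / (z - a)\<close> satisfies \<open>M v = a v\<close>.
  Since \<open>\<sigma>\<^sub>M\<close> is positive semidefinite and vanishes at \<open>(-conj(a) v, v)\<close>, its first
  variation there vanishes, which says that \<open>v\<close> is also an eigenvector of the adjoint of \<open>M\<close>.
  Hence \<open>P\<close> has simple roots and its cofactors are pairwise orthogonal; expanding in
  this orthogonal basis gives the quadrature rule on \<open>A\<^sub>d \<times> A\<^sub>d\<close> with weights
  \<open>\<parallel>v\<^sub>k\<parallel>\<^sup>2 / |v\<^sub>k(a\<^sub>k)|\<^sup>2\<close>, and it extends to \<open>A\<^sub>d\<^sub>+\<^sub>1 \<times> A\<^sub>d\<close> because \<open>P\<close> is orthogonal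
  to \<open>A\<^sub>d\<close> and vanishes at the nodes.\<close>

section \<open>Hermitian products and interpolation\<close>

lemma hprod_eq_coeff: "hprod p q = (\<lambda>i j. coeff p i * cnj (coeff q j))"
proof (intro ext)
  fix i j :: nat
  have collapse: "(\<Sum>b\<le>j. (if b = 0 then x else 0) * f b) = x * f 0" for x :: complex and f
    by (subst sum.remove[of "{..j}" 0]) auto
  have "hprod p q i j = (\<Sum>a\<le>i. coeff p a * cnj (if i - a = 0 then coeff q j else 0))"
    by (simp add: hprod_def bmult_def bemb_def bconj_def collapse cong: if_cong)
  also have "\<dots> = (\<Sum>a\<le>i. if a = i then coeff p i * cnj (coeff q j) else 0)"
    by (intro sum.cong refl) auto
  finally show "hprod p q i j = coeff p i * cnj (coeff q j)" by simp
qed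

lemma in_bdeg_hprod: "degree p + degree q \<le> n \<Longrightarrow> in_bdeg n (hprod p q)"
  unfolding in_bdeg_def hprod_eq_coeff
  by (metis add_le_mono le_degree le_trans mult_eq_0_iff complex_cnj_zero_iff)

lemma hprod_add_left: "hprod (p1 + p2) q = badd (hprod p1 q) (hprod p2 q)"
  by (simp add: hprod_eq_coeff badd_def algebra_simps)

lemma hprod_add_right: "hprod p (q1 + q2) = badd (hprod p q1) (hprod p q2)"
  by (simp add: hprod_eq_coeff badd_def algebra_simps)

lemma hprod_smult_left: "hprod (smult c p) q = bscale c (hprod p q)"
  by (simp add: hprod_eq_coeff bscale_def algebra_simps)

lemma hprod_smult_right: "hprod p (smult c q) = bscale (cnj c) (hprod p q)"
  by (simp add: hprod_eq_coeff bscale_def algebra_simps)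

lemma bconj_hprod: "bconj (hprod p q) = hprod q p"
  by (simp add: hprod_eq_coeff bconj_def algebra_simps)

definition node_cofactor :: "('a \<Rightarrow> 'b::idom) \<Rightarrow> 'a set \<Rightarrow> 'a \<Rightarrow> 'b poly" where
  "node_cofactor a K k = (\<Prod>j\<in>K - {k}. [:- a j, 1:])"

lemma degree_node_cofactor_le:
  "finite K \<Longrightarrow> k \<in> K \<Longrightarrow> degree (node_cofactor a K k) \<le> card K - 1"
proof -
  assume K: "finite K" and "k \<in> K"
  have "degree (node_cofactor a K k) \<le> sum (degree \<circ> (\<lambda>j. [:- a j, 1:])) (K - {k})"
    unfolding node_cofactor_def using K by (intro degree_prod_sum_le) simp
  also have "\<dots> = card (K - {k})" by simp
  also have "\<dots> = card K - 1" using K \<open>k \<in> K\<close> by simp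
  finally show ?thesis .
qed

lemma node_cofactor_nonzero: "finite K \<Longrightarrow> node_cofactor a K k \<noteq> 0"
  by (simp add: node_cofactor_def)

lemma poly_node_cofactor_eq_0:
  "finite K \<Longrightarrow> j \<in> K \<Longrightarrow> j \<noteq> k \<Longrightarrow> poly (node_cofactor a K k) (a j) = 0"
  unfolding node_cofactor_def poly_prod by auto

lemma poly_node_cofactor_nonzero:
  "finite K \<Longrightarrow> inj_on a K \<Longrightarrow> k \<in> K \<Longrightarrow> poly (node_cofactor a K k) (a k) \<noteq> 0"
  unfolding node_cofactor_def poly_prod by (auto simp: inj_on_def)

lemma linear_factor_mult_node_cofactor:
  "finite K \<Longrightarrow> k \<in> K \<Longrightarrow> [:- a k, 1:] * node_cofactor a K k = (\<Prod>j\<in>K. [:- a j, 1:])"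
  unfolding node_cofactor_def by (rule prod.remove[symmetric])

lemma node_cofactor_expansion:
  fixes a :: "'a \<Rightarrow> 'b::field"
  assumes K: "finite K" and inj: "inj_on a K" and deg: "degree p < card K"
  shows "p = (\<Sum>k\<in>K. smult (poly p (a k) / poly (node_cofactor a K k) (a k)) (node_cofactor a K k))"
    (is "p = ?q")
proof (rule poly_eqI_degree[of "a ` K"])
  fix x assume "x \<in> a ` K"
  then obtain j where j: "j \<in> K" "x = a j" by auto
  have "(\<Sum>k\<in>K - {j}. poly p (a k) / poly (node_cofactor a K k) (a k) * poly (node_cofactor a K k) (a j)) = 0"
    using poly_node_cofactor_eq_0[OF K j(1), of _ a] by (intro sum.neutral) auto
  then have "poly ?q x = poly p (a j) / poly (node_cofactor a K j) (a j) * poly (node_cofactor a K j) (a j)"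
    unfolding poly_sum j(2) by (subst sum.remove[OF K j(1)]) auto
  also have "\<dots> = poly p x"
    using poly_node_cofactor_nonzero[OF K inj j(1)] j(2) by simp
  finally show "poly p x = poly ?q x" by simp
next
  have card: "card (a ` K) = card K" using inj by (rule card_image)
  then show "degree p < card (a ` K)" using deg by simp
  have "degree ?q \<le> card K - 1"
    using K degree_node_cofactor_le[OF K]
    by (intro degree_sum_le) (auto intro: order.trans[OF degree_smult_le])
  then show "degree ?q < card (a ` K)" using card deg by linarith
qed

lemma degree_diff_smult_monic_le:
  fixes r e :: "'a::comm_ring_1 poly"
  assumes "degree r \<le> Suc k" "degree e \<le> Suc k" "coeff e (Suc k) = 1"
  shows "degree (r - smult (coeff r (Suc k)) e) \<le> k"
proof (rule degree_le, intro allI impI)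
  fix i assume "k < i"
  then consider "i = Suc k" | "Suc k < i" by linarith
  then show "coeff (r - smult (coeff r (Suc k)) e) i = 0"
    by cases (use assms in \<open>simp_all add: coeff_eq_0\<close>)
qed

lemma nonneg_quadratic_imp_linear_coeff_eq_0:
  fixes b x :: real
  assumes "\<And>t. 0 \<le> 2*t*b + t^2*x"
  shows "b = 0"
proof (rule ccontr)
  assume "b \<noteq> 0"
  define t where "t = - b / (\<bar>x\<bar> + 1)"
  have b: "b = - t * (\<bar>x\<bar> + 1)" and "t \<noteq> 0"
    using \<open>b \<noteq> 0\<close> by (simp_all add: t_def add_pos_nonneg)
  have "2*t*b + t^2*x \<le> 2*t*b + t^2*\<bar>x\<bar>"
    by (intro add_left_mono mult_left_mono) auto
  also have "\<dots> = - (t^2) * (\<bar>x\<bar> + 2)"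
    unfolding b by (simp add: power2_eq_square algebra_simps)
  also have "\<dots> < 0"
    using \<open>t \<noteq> 0\<close> by (simp add: add_pos_nonneg)
  finally show False using assms[of t] by linarith
qed

section \<open>The inner product and the compression \<open>M\<close>\<close>

locale hermitian_functional =
  fixes d :: nat and L :: "bpoly \<Rightarrow> complex"
  assumes lin: "lin_functional (2*d+2) L"
    and real: "real_functional (2*d+2) L"
    and strict: "\<And>p. p \<noteq> 0 \<Longrightarrow> degree p \<le> d \<Longrightarrow>
                   L (hprod p p) \<in> \<real> \<and> Re (L (hprod p p)) > 0"
begin

abbreviation ip where "ip \<equiv> ipL L"
abbreviation M where "M \<equiv> compM L d"

text \<open>Membership in the spaces \<open>A\<^sub>d\<close> and \<open>A\<^sub>d\<^sub>+\<^sub>1\<close>; on the latter \<open>ip\<close> is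
  only a semidefinite hermitian form.\<close>
definition Ad :: "complex poly \<Rightarrow> bool" where "Ad p \<longleftrightarrow> degree p \<le> d"
definition Ad1 :: "complex poly \<Rightarrow> bool" where "Ad1 p \<longleftrightarrow> degree p \<le> Suc d"

lemma Ad_imp_Ad1 [simp]: "Ad p \<Longrightarrow> Ad1 p"
  by (simp add: Ad_def Ad1_def)

lemma Ad1_add [simp]: "Ad1 p \<Longrightarrow> Ad1 q \<Longrightarrow> Ad1 (p + q)"
  unfolding Ad1_def by (meson degree_add_le)
lemma Ad1_diff [simp]: "Ad1 p \<Longrightarrow> Ad1 q \<Longrightarrow> Ad1 (p - q)"
  unfolding Ad1_def by (meson degree_diff_le)
lemma Ad1_smult [simp]: "Ad1 p \<Longrightarrow> Ad1 (smult c p)"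
  unfolding Ad1_def by (meson degree_smult_le order.trans)
lemma Ad1_minus [simp]: "Ad1 p \<Longrightarrow> Ad1 (- p)"
  unfolding Ad1_def by simp
lemma Ad1_pCons [simp]: "Ad p \<Longrightarrow> Ad1 (pCons c p)"
  unfolding Ad_def Ad1_def by (cases "p = 0") auto
lemma Ad1_sum [simp]: "(\<And>i. i \<in> S \<Longrightarrow> Ad1 (f i)) \<Longrightarrow> Ad1 (sum f S)"
  unfolding Ad1_def by (cases "finite S") (auto intro: degree_sum_le)

lemma Ad_add [simp]: "Ad p \<Longrightarrow> Ad q \<Longrightarrow> Ad (p + q)"
  unfolding Ad_def by (meson degree_add_le)
lemma Ad_diff [simp]: "Ad p \<Longrightarrow> Ad q \<Longrightarrow> Ad (p - q)"
  unfolding Ad_def by (meson degree_diff_le)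
lemma Ad_smult [simp]: "Ad p \<Longrightarrow> Ad (smult c p)"
  unfolding Ad_def by (meson degree_smult_le order.trans)
lemma Ad_minus [simp]: "Ad p \<Longrightarrow> Ad (- p)"
  unfolding Ad_def by simp
lemma Ad_0 [simp]: "Ad 0"
  by (simp add: Ad_def)

lemma in_bdeg_hprod_Ad1: "Ad1 p \<Longrightarrow> Ad1 q \<Longrightarrow> in_bdeg (2*d+2) (hprod p q)"
  unfolding Ad1_def by (intro in_bdeg_hprod) simp

lemma ip_add_left [simp]: "Ad1 p1 \<Longrightarrow> Ad1 p2 \<Longrightarrow> Ad1 q \<Longrightarrow> ip (p1 + p2) q = ip p1 q + ip p2 q"
  using lin in_bdeg_hprod_Ad1 unfolding lin_functional_def ipL_def hprod_add_left by blast
lemma ip_add_right [simp]: "Ad1 p \<Longrightarrow> Ad1 q1 \<Longrightarrow> Ad1 q2 \<Longrightarrow> ip p (q1 + q2) = ip p q1 + ip p q2"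
  using lin in_bdeg_hprod_Ad1 unfolding lin_functional_def ipL_def hprod_add_right by blast
lemma ip_smult_left [simp]: "Ad1 p \<Longrightarrow> Ad1 q \<Longrightarrow> ip (smult c p) q = c * ip p q"
  using lin in_bdeg_hprod_Ad1 unfolding lin_functional_def ipL_def hprod_smult_left by blast
lemma ip_smult_right [simp]: "Ad1 p \<Longrightarrow> Ad1 q \<Longrightarrow> ip p (smult c q) = cnj c * ip p q"
  using lin in_bdeg_hprod_Ad1 unfolding lin_functional_def ipL_def hprod_smult_right by blast
lemma ip_commute_cnj: "Ad1 p \<Longrightarrow> Ad1 q \<Longrightarrow> ip q p = cnj (ip p q)"
  using real in_bdeg_hprod_Ad1 unfolding real_functional_def ipL_def by (metis bconj_hprod)

lemma ip_zero_left [simp]: "Ad1 q \<Longrightarrow> ip 0 q = 0"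
  using ip_smult_left[of 0 q 0] by simp
lemma ip_zero_right [simp]: "Ad1 p \<Longrightarrow> ip p 0 = 0"
  using ip_smult_right[of p 0 0] by simp
lemma ip_minus_left [simp]: "Ad1 p \<Longrightarrow> Ad1 q \<Longrightarrow> ip (- p) q = - ip p q"
  using ip_smult_left[of p q "-1"] by simp
lemma ip_minus_right [simp]: "Ad1 p \<Longrightarrow> Ad1 q \<Longrightarrow> ip p (- q) = - ip p q"
  using ip_smult_right[of p q "-1"] by simp
lemma ip_diff_left [simp]: "Ad1 p1 \<Longrightarrow> Ad1 p2 \<Longrightarrow> Ad1 q \<Longrightarrow> ip (p1 - p2) q = ip p1 q - ip p2 q"
  using ip_add_left[of p1 "- p2" q] by simp
lemma ip_diff_right [simp]: "Ad1 p \<Longrightarrow> Ad1 q1 \<Longrightarrow> Ad1 q2 \<Longrightarrow> ip p (q1 - q2) = ip p q1 - ip p q2"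
  using ip_add_right[of p q1 "- q2"] by simp

lemma ip_sum_left:
  "(\<And>i. i \<in> S \<Longrightarrow> Ad1 (f i)) \<Longrightarrow> Ad1 q \<Longrightarrow> ip (sum f S) q = (\<Sum>i\<in>S. ip (f i) q)"
  by (induction S rule: infinite_finite_induct) simp_all

lemma ip_sum_right:
  "(\<And>i. i \<in> S \<Longrightarrow> Ad1 (f i)) \<Longrightarrow> Ad1 p \<Longrightarrow> ip p (sum f S) = (\<Sum>i\<in>S. ip p (f i))"
  by (induction S rule: infinite_finite_induct) simp_all

lemma ip_self_real: "Ad1 p \<Longrightarrow> of_real (Re (ip p p)) = ip p p"
  using ip_commute_cnj[of p p] by (simp add: complex_eq_iff)

lemma ip_self_pos: "Ad p \<Longrightarrow> p \<noteq> 0 \<Longrightarrow> Re (ip p p) > 0"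
  using strict unfolding Ad_def ipL_def by auto

lemma ip_self_eq_0: "Ad p \<Longrightarrow> ip p p = 0 \<Longrightarrow> p = 0"
  using ip_self_pos by force

lemma ip_orthogonal_correction:
  assumes "Ad1 g" "Ad e" "e \<noteq> 0" "Ad1 r" "ip g r = 0" "ip e r = 0"
  shows "ip (g - smult (ip g e / ip e e) e) (r + smult c e) = 0"
proof -
  have "ip e e \<noteq> 0" using ip_self_pos[OF assms(2,3)] by force
  then show ?thesis using assms by (simp add: algebra_simps)
qed

text \<open>Gram--Schmidt: the projection onto degree \<open>\<le> k + 1\<close> corrects the one onto degree
  \<open>\<le> k\<close> along \<open>e = z\<^sup>k\<^sup>+\<^sup>1 - \<pi>\<^sub>k z\<^sup>k\<^sup>+\<^sup>1\<close>.\<close>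
lemma ex_proj_onto_degree_le:
  "k \<le> d \<Longrightarrow> Ad1 f \<Longrightarrow> \<exists>q. degree q \<le> k \<and> (\<forall>r. degree r \<le> k \<longrightarrow> ip (f - q) r = 0)"
proof (induction k arbitrary: f)
  case 0
  show ?case
  proof (intro exI conjI allI impI)
    show "degree [:ip f 1 / ip 1 1:] \<le> 0" by simp
    fix r :: "complex poly" assume "degree r \<le> 0"
    then have "r = 0 + smult (coeff r 0) 1" by (simp add: degree_0_id)
    then show "ip (f - [:ip f 1 / ip 1 1:]) r = 0"
      using ip_orthogonal_correction[of f 1 0 "coeff r 0"] 0 by (simp add: Ad_def)
  qed
next
  case (Suc k)
  have "Ad1 (monom 1 (Suc k))" using Suc.prems by (simp add: Ad1_def degree_monom_eq)
  then obtain qe where qe: "degree qe \<le> k" "\<And>r. degree r \<le> k \<Longrightarrow> ip (monom 1 (Suc k) - qe) r = 0"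
    using Suc by force
  obtain qf where qf: "degree qf \<le> k" "\<And>r. degree r \<le> k \<Longrightarrow> ip (f - qf) r = 0"
    using Suc by force
  define e where "e = monom 1 (Suc k) - qe"
  have e_lead: "coeff e (Suc k) = 1" using qe(1) by (simp add: e_def coeff_eq_0)
  have e_deg: "degree e \<le> Suc k"
    unfolding e_def by (metis degree_diff_le degree_monom_le le_SucI qe(1))
  have "Ad e" "Ad qf" using e_deg qf(1) Suc.prems(1) by (simp_all add: Ad_def)
  define l where "l = ip (f - qf) e / ip e e"
  show ?case
  proof (intro exI conjI allI impI)
    show "degree (qf + smult l e) \<le> Suc k"
      by (metis e_deg degree_add_le degree_smult_le le_SucI order.trans qf(1))
    fix r :: "complex poly" assume r: "degree r \<le> Suc k"
    define r' where "r' = r - smult (coeff r (Suc k)) e"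
    have r': "degree r' \<le> k"
      unfolding r'_def using r e_deg e_lead by (rule degree_diff_smult_monic_le)
    have "Ad r'" using r' Suc.prems(1) by (simp add: Ad_def)
    have "e \<noteq> 0" using e_lead by auto
    have "ip ((f - qf) - smult l e) (r' + smult (coeff r (Suc k)) e) = 0"
      unfolding l_def using qf(2)[OF r'] qe(2)[OF r'] \<open>Ad r'\<close> \<open>Ad e\<close> \<open>Ad qf\<close> \<open>e \<noteq> 0\<close> Suc.prems(2)
      by (intro ip_orthogonal_correction) (simp_all add: e_def)
    moreover have "r' + smult (coeff r (Suc k)) e = r" "f - qf - smult l e = f - (qf + smult l e)"
      by (simp_all add: r'_def algebra_simps)
    ultimately show "ip (f - (qf + smult l e)) r = 0" by simp
  qed
qed

lemma projL_unique:
  assumes "Ad1 f" "Ad q" "\<And>r. Ad r \<Longrightarrow> ip (f - q) r = 0"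
  shows "projL L d f = q"
  unfolding projL_def
proof (rule the_equality)
  show "degree q \<le> d \<and> (\<forall>r. degree r \<le> d \<longrightarrow> ip (f - q) r = 0)"
    using assms by (auto simp: Ad_def)
  fix q' assume q': "degree q' \<le> d \<and> (\<forall>r. degree r \<le> d \<longrightarrow> ip (f - q') r = 0)"
  then have "Ad q'" by (simp add: Ad_def)
  have "ip (q - q') (q - q') = ip (f - q') (q - q') - ip (f - q) (q - q')"
    using assms \<open>Ad q'\<close> by (simp add: algebra_simps)
  also have "\<dots> = 0" using q' assms \<open>Ad q'\<close> by (simp add: Ad_def[symmetric])
  finally show "q' = q" using ip_self_eq_0[of "q - q'"] assms \<open>Ad q'\<close> by simp
qed

lemma
  assumes "Ad1 f"
  shows Ad_projL: "Ad (projL L d f)"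
    and ip_projL_orthogonal: "Ad r \<Longrightarrow> ip (f - projL L d f) r = 0"
proof -
  obtain q where q: "degree q \<le> d" "\<And>r. degree r \<le> d \<Longrightarrow> ip (f - q) r = 0"
    using ex_proj_onto_degree_le[OF le_refl assms] by auto
  then have "projL L d f = q" using projL_unique[OF assms, of q] by (auto simp: Ad_def)
  then show "Ad (projL L d f)" "Ad r \<Longrightarrow> ip (f - projL L d f) r = 0"
    using q by (auto simp: Ad_def)
qed

lemma Ad_compM [simp]: "Ad p \<Longrightarrow> Ad (M p)"
  by (simp add: compM_def Ad_projL)

lemma ip_compM_orthogonal: "Ad p \<Longrightarrow> Ad r \<Longrightarrow> ip (pCons 0 p - M p) r = 0"
  by (simp add: compM_def ip_projL_orthogonal)

lemma compM_eqI: "Ad p \<Longrightarrow> Ad q \<Longrightarrow> (\<And>r. Ad r \<Longrightarrow> ip (pCons 0 p - q) r = 0) \<Longrightarrow> M p = q"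
  unfolding compM_def by (rule projL_unique) auto

lemma compM_add: "Ad p \<Longrightarrow> Ad q \<Longrightarrow> M (p + q) = M p + M q"
proof (rule compM_eqI)
  fix r assume "Ad p" "Ad q" "Ad r"
  have "pCons 0 (p + q) - (M p + M q) = (pCons 0 p - M p) + (pCons 0 q - M q)" by simp
  moreover have "ip ((pCons 0 p - M p) + (pCons 0 q - M q)) r = 0"
    using ip_compM_orthogonal \<open>Ad p\<close> \<open>Ad q\<close> \<open>Ad r\<close> by (simp del: ip_diff_left)
  ultimately show "ip (pCons 0 (p + q) - (M p + M q)) r = 0" by (simp only:)
qed simp_all

lemma compM_smult: "Ad p \<Longrightarrow> M (smult c p) = smult c (M p)"
proof (rule compM_eqI)
  fix r assume "Ad p" "Ad r"
  have "pCons 0 (smult c p) - smult c (M p) = smult c (pCons 0 p - M p)"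
    by (simp add: smult_diff_right)
  moreover have "ip (smult c (pCons 0 p - M p)) r = 0"
    using ip_compM_orthogonal \<open>Ad p\<close> \<open>Ad r\<close> by (simp del: ip_diff_left)
  ultimately show "ip (pCons 0 (smult c p) - smult c (M p)) r = 0" by (simp only:)
qed simp_all

text \<open>At \<open>p = -cnj a \<cdot> v\<close> the form \<open>\<sigma>\<^sub>M(p, v)\<close> vanishes; this is its expansion in a
  direction \<open>x\<close>.\<close>
lemma sigmaM_eigvec_perturbation:
  assumes v: "Ad v" "M v = smult a v" and x: "Ad x"
  shows "sigmaM L d (smult (- cnj a) v + smult s x) v =
           2 * Re (s * (ip (M x) v - a * ip x v)) + (cmod s)^2 * Re (ip x x)"
proof -
  let ?p = "smult (- cnj a) v + smult s x"
  have "M ?p = M (smult (- cnj a) v) + M (smult s x)"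
    using v x by (intro compM_add) simp_all
  also have "\<dots> = smult (- cnj a) (M v) + smult s (M x)"
    using v x by (simp only: compM_smult)
  finally have Mp: "M ?p = smult (- cnj a * a) v + smult s (M x)"
    using v by simp
  have norm_sq: "z * cnj z = of_real ((cmod z)^2)" for z
    by (metis complex_norm_square)
  have real_v: "ip v v = of_real (Re (ip v v))" and real_x: "ip x x = of_real (Re (ip x x))"
    using ip_self_real v x by simp_all
  have pp: "ip ?p ?p = a * cnj a * ip v v - cnj (a * s * ip x v) - a * s * ip x v + s * cnj s * ip x x"
    using v x ip_commute_cnj[of x v] by (simp add: algebra_simps)
  have vv: "ip (M v) (M v) = a * cnj a * ip v v"
    using v by (simp add: algebra_simps)
  have pv: "ip (M ?p) v = - (cnj a * a) * ip v v + s * ip (M x) v"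
    unfolding Mp using v x by (simp add: algebra_simps)
  show ?thesis
    unfolding sigmaM_def pp vv pv
    by (subst (1 2 3) real_v, subst real_x)
       (simp add: norm_sq mult.commute[of "cnj a" a] algebra_simps)
qed

definition orth_poly :: "complex poly" where
  "orth_poly = monom 1 (Suc d) - projL L d (monom 1 (Suc d))"

lemma Ad1_monom: "Ad1 (monom 1 (Suc d))"
  by (simp add: Ad1_def degree_monom_eq)

lemma Ad1_orth_poly: "Ad1 orth_poly"
  unfolding orth_poly_def using Ad1_monom Ad_projL by simp

lemma ip_orth_poly_eq_0: "Ad r \<Longrightarrow> ip orth_poly r = 0"
  unfolding orth_poly_def by (rule ip_projL_orthogonal[OF Ad1_monom])

lemma coeff_orth_poly: "coeff orth_poly (Suc d) = 1"
  using Ad_projL[OF Ad1_monom] by (simp add: orth_poly_def Ad_def coeff_eq_0)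

lemma degree_orth_poly: "degree orth_poly = Suc d"
  using Ad1_orth_poly coeff_orth_poly by (metis Ad1_def le_antisym le_degree one_neq_zero)

lemma compM_orth_poly_cofactor:
  assumes "orth_poly = [:- a, 1:] * v"
  shows "Ad v" and "M v = smult a v"
proof -
  have "v \<noteq> 0" using assms degree_orth_poly by auto
  then have "degree orth_poly = 1 + degree v"
    unfolding assms by (subst degree_mult_eq) auto
  then show "Ad v" using degree_orth_poly unfolding Ad_def by linarith
  have "pCons 0 v - smult a v = orth_poly"
    unfolding assms by simp
  then show "M v = smult a v"
    using \<open>Ad v\<close> ip_orth_poly_eq_0 by (intro compM_eqI) simp_all
qed

definition is_quadrature :: "nat \<Rightarrow> (nat \<Rightarrow> complex) \<Rightarrow> (nat \<Rightarrow> real) \<Rightarrow> bool" where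
  "is_quadrature N a c \<longleftrightarrow> (\<forall>k<N. 0 < c k) \<and>
     (\<forall>p q. Ad1 p \<longrightarrow> Ad q \<longrightarrow> ip p q = (\<Sum>k<N. of_real (c k) * poly p (a k) * cnj (poly q (a k))))"

lemma is_quadrature_iff:
  "is_quadrature N a c \<longleftrightarrow> (\<forall>k<N. c k > 0) \<and>
     (\<forall>p q. degree p \<le> d + 1 \<longrightarrow> degree q \<le> d + 1 \<longrightarrow> degree p + degree q \<le> 2*d+1 \<longrightarrow>
        L (hprod p q) = (\<Sum>k<N. of_real (c k) * poly p (a k) * cnj (poly q (a k))))"
  (is "?lhs \<longleftrightarrow> ?rhs")
proof
  assume quad: ?lhs
  have "L (hprod p q) = (\<Sum>k<N. of_real (c k) * poly p (a k) * cnj (poly q (a k)))"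
    if "degree p \<le> d + 1" "degree q \<le> d + 1" "degree p + degree q \<le> 2*d+1" for p q
  proof (cases "degree q \<le> d")
    case True
    then show ?thesis using quad that by (simp add: is_quadrature_def Ad_def Ad1_def ipL_def)
  next
    case False
    then have "Ad p" "Ad1 q" using that by (simp_all add: Ad_def Ad1_def)
    then have "L (hprod p q) = cnj (ip q p)" using ip_commute_cnj[of q p] by (simp add: ipL_def)
    also have "\<dots> = (\<Sum>k<N. of_real (c k) * poly p (a k) * cnj (poly q (a k)))"
      using quad \<open>Ad p\<close> \<open>Ad1 q\<close> by (simp add: is_quadrature_def mult_ac)
    finally show ?thesis .
  qed
  then show ?rhs using quad by (simp add: is_quadrature_def)
next
  assume ?rhs
  then show ?lhs by (auto simp: is_quadrature_def Ad_def Ad1_def ipL_def)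
qed

end

section \<open>Quadrature rules make \<open>\<sigma>\<^sub>M\<close> positive semidefinite\<close>

locale quadrature_rule = hermitian_functional +
  fixes N :: nat and a :: "nat \<Rightarrow> complex" and c :: "nat \<Rightarrow> real"
  assumes N_le: "N \<le> Suc d" and quadrature: "is_quadrature N a c"
begin

lemma weight_pos: "k < N \<Longrightarrow> 0 < c k"
  using quadrature by (simp add: is_quadrature_def)

lemma ip_eq_quadrature:
  "Ad1 p \<Longrightarrow> Ad q \<Longrightarrow> ip p q = (\<Sum>k<N. of_real (c k) * poly p (a k) * cnj (poly q (a k)))"
  using quadrature by (simp add: is_quadrature_def)

text \<open>A nonzero polynomial of degree at most \<open>d\<close> vanishing at all nodes would have norm zero.\<close>
lemma inj_on_nodes: "inj_on a {..<N}"
proof -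
  let ?S = "a ` {..<N}"
  have "d < card ?S"
  proof (rule ccontr)
    assume "\<not> d < card ?S"
    define p where "p = (\<Prod>s\<in>?S. [:- s, 1:])"
    have "degree p \<le> sum (degree \<circ> (\<lambda>s. [:- s, 1:])) ?S"
      unfolding p_def by (intro degree_prod_sum_le) simp
    then have "Ad p" using \<open>\<not> d < card ?S\<close> by (simp add: Ad_def)
    moreover have "poly p (a k) = 0" if "k < N" for k
      unfolding p_def poly_prod using that by auto
    ultimately have "ip p p = 0" by (simp add: ip_eq_quadrature)
    moreover have "p \<noteq> 0" by (simp add: p_def)
    ultimately show False using ip_self_eq_0 \<open>Ad p\<close> by blast
  qed
  moreover have "card ?S \<le> N" using card_image_le[of "{..<N}" a] by simp
  ultimately show ?thesis using N_le by (simp add: eq_card_imp_inj_on)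
qed

lemma Ad_node_cofactor: "k < N \<Longrightarrow> Ad (node_cofactor a {..<N} k)"
  using degree_node_cofactor_le[of "{..<N}" k a] N_le by (simp add: Ad_def)

lemma poly_compM_node: "Ad r \<Longrightarrow> k < N \<Longrightarrow> poly (M r) (a k) = a k * poly r (a k)"
proof -
  assume r: "Ad r" and k: "k < N"
  define u where "u = pCons 0 r - M r"
  define l where "l = node_cofactor a {..<N} k"
  have "Ad1 u" using r by (simp add: u_def)
  have "0 = ip u l"
    using ip_compM_orthogonal[OF r Ad_node_cofactor[OF k]] by (simp add: u_def l_def)
  also have "\<dots> = (\<Sum>j<N. of_real (c j) * poly u (a j) * cnj (poly l (a j)))"
    using ip_eq_quadrature \<open>Ad1 u\<close> Ad_node_cofactor[OF k] by (simp add: l_def)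
  also have "\<dots> = of_real (c k) * poly u (a k) * cnj (poly l (a k))"
    using k poly_node_cofactor_eq_0[of "{..<N}" _ k a]
    by (subst sum.remove[of _ k]) (auto simp: l_def intro!: sum.neutral)
  finally have "poly u (a k) = 0"
    using weight_pos[OF k] poly_node_cofactor_nonzero[OF _ inj_on_nodes, of k] k by (simp add: l_def)
  then show ?thesis by (simp add: u_def)
qed

lemma sigmaM_eq_sum_squares:
  assumes "Ad p" "Ad q"
  shows "sigmaM L d p q = (\<Sum>k<N. c k * (cmod (poly p (a k) + cnj (a k) * poly q (a k)))^2)"
proof -
  have square: "Re (of_real w * x * cnj x) + Re (of_real w * (b * y) * cnj (b * y))
      + 2 * Re (of_real w * (b * x) * cnj y) = w * (cmod (x + cnj b * y))^2" for w x y b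
    unfolding cmod_power2 by (simp add: algebra_simps power2_eq_square)
  have "sigmaM L d p q = (\<Sum>k<N. Re (of_real (c k) * poly p (a k) * cnj (poly p (a k))) +
      Re (of_real (c k) * (a k * poly q (a k)) * cnj (a k * poly q (a k))) +
      2 * Re (of_real (c k) * (a k * poly p (a k)) * cnj (poly q (a k))))"
    using assms unfolding sigmaM_def
    by (simp add: ip_eq_quadrature poly_compM_node sum.distrib sum_distrib_left)
  also have "\<dots> = (\<Sum>k<N. c k * (cmod (poly p (a k) + cnj (a k) * poly q (a k)))^2)"
    by (simp only: square)
  finally show ?thesis .
qed

lemma sigmaM_nonneg: "Ad p \<Longrightarrow> Ad q \<Longrightarrow> 0 \<le> sigmaM L d p q"
  unfolding sigmaM_eq_sum_squares using weight_pos by (intro sum_nonneg) (simp add: less_imp_le)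

end

section \<open>Positivity of \<open>\<sigma>\<^sub>M\<close> yields a quadrature rule\<close>

locale nonneg_sigma = hermitian_functional +
  assumes sigma_nonneg: "Ad p \<Longrightarrow> Ad q \<Longrightarrow> 0 \<le> sigmaM L d p q"
begin

lemma ip_compM_eigvec:
  assumes v: "Ad v" "M v = smult a v" and x: "Ad x"
  shows "ip (M x) v = a * ip x v"
proof -
  define w where "w = ip (M x) v - a * ip x v"
  have nonneg: "0 \<le> 2 * Re (s * w) + (cmod s)^2 * Re (ip x x)" for s
  proof -
    have "0 \<le> sigmaM L d (smult (- cnj a) v + smult s x) v"
      using v x by (intro sigma_nonneg) simp_all
    then show ?thesis unfolding sigmaM_eigvec_perturbation[OF v x] w_def .
  qed
  have "Re w = 0"
    by (rule nonneg_quadratic_imp_linear_coeff_eq_0[of _ "Re (ip x x)"])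
       (use nonneg[of "of_real t" for t] in \<open>simp add: mult.assoc\<close>)
  moreover have "- Im w = 0"
    by (rule nonneg_quadratic_imp_linear_coeff_eq_0[of _ "Re (ip x x)"])
       (use nonneg[of "\<i> * of_real t" for t] in \<open>simp add: norm_mult mult.assoc\<close>)
  ultimately show ?thesis by (simp add: w_def complex_eq_iff)
qed

text \<open>A double root \<open>a\<close> would give a Jordan chain \<open>M u = a u + v\<close>, against
  \<open>ip_compM_eigvec\<close>.\<close>
lemma orth_poly_cofactor_root_nonzero:
  assumes fac: "orth_poly = [:- a, 1:] * v"
  shows "poly v a \<noteq> 0"
proof
  assume "poly v a = 0"
  then obtain u where u: "v = [:- a, 1:] * u" by (auto simp: poly_eq_0_iff_dvd dvd_def)
  have "Ad v" and Mv: "M v = smult a v" using compM_orth_poly_cofactor[OF fac] by simp_all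
  have "v \<noteq> 0" using fac degree_orth_poly by auto
  then have "degree v = 1 + degree u"
    unfolding u by (subst degree_mult_eq) auto
  then have "Ad u" using \<open>Ad v\<close> by (simp add: Ad_def)
  have "M u = smult a u + v"
  proof (rule compM_eqI)
    show "Ad u" "Ad (smult a u + v)" using \<open>Ad u\<close> \<open>Ad v\<close> by simp_all
    show "ip (pCons 0 u - (smult a u + v)) r = 0" if "Ad r" for r
      using that by (simp add: u)
  qed
  then have "ip v v = 0"
    using ip_compM_eigvec[OF \<open>Ad v\<close> Mv \<open>Ad u\<close>] \<open>Ad u\<close> \<open>Ad v\<close> by simp
  then show False using ip_self_eq_0 \<open>Ad v\<close> \<open>v \<noteq> 0\<close> by blast
qed

lemma orth_poly_cofactors_orthogonal:
  assumes "orth_poly = [:- a, 1:] * v" "orth_poly = [:- b, 1:] * w" "a \<noteq> b"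
  shows "ip v w = 0"
proof -
  have v: "Ad v" "M v = smult a v" and w: "Ad w" "M w = smult b w"
    using compM_orth_poly_cofactor[OF assms(1)] compM_orth_poly_cofactor[OF assms(2)] by simp_all
  have "a * ip v w = b * ip v w"
    using ip_compM_eigvec[OF w v(1)] v w by simp
  then show ?thesis using \<open>a \<noteq> b\<close> by simp
qed

end

locale orth_poly_roots = nonneg_sigma +
  fixes root :: "nat \<Rightarrow> complex"
  assumes orth_poly_eq_prod: "orth_poly = (\<Prod>i<Suc d. [:- root i, 1:])"
begin

abbreviation cofactor :: "nat \<Rightarrow> complex poly" where
  "cofactor \<equiv> node_cofactor root {..<Suc d}"

lemma orth_poly_eq_cofactor: "k \<le> d \<Longrightarrow> orth_poly = [:- root k, 1:] * cofactor k"
  unfolding orth_poly_eq_prod by (rule linear_factor_mult_node_cofactor[symmetric]) simp_all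

lemma Ad_cofactor: "k \<le> d \<Longrightarrow> Ad (cofactor k)"
  using compM_orth_poly_cofactor orth_poly_eq_cofactor by blast

lemma poly_cofactor_root_nonzero: "k \<le> d \<Longrightarrow> poly (cofactor k) (root k) \<noteq> 0"
  using orth_poly_cofactor_root_nonzero orth_poly_eq_cofactor by blast

lemma poly_orth_poly_root: "k \<le> d \<Longrightarrow> poly orth_poly (root k) = 0"
  by (simp add: orth_poly_eq_cofactor)

lemma inj_on_root: "inj_on root {..<Suc d}"
proof (rule inj_onI)
  fix j k assume "j \<in> {..<Suc d}" "k \<in> {..<Suc d}" "root j = root k"
  then show "j = k"
    using poly_node_cofactor_eq_0[of "{..<Suc d}" j k root] poly_cofactor_root_nonzero[of k] by auto
qed

lemma ip_cofactors_orthogonal: "j \<le> d \<Longrightarrow> k \<le> d \<Longrightarrow> j \<noteq> k \<Longrightarrow> ip (cofactor j) (cofactor k) = 0"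
  using orth_poly_cofactors_orthogonal[OF orth_poly_eq_cofactor orth_poly_eq_cofactor]
    inj_onD[OF inj_on_root, of j k] by auto

definition coord :: "complex poly \<Rightarrow> nat \<Rightarrow> complex" where
  "coord p k = poly p (root k) / poly (cofactor k) (root k)"

lemma cofactor_expansion: "Ad p \<Longrightarrow> p = (\<Sum>k<Suc d. smult (coord p k) (cofactor k))"
  unfolding coord_def using inj_on_root by (intro node_cofactor_expansion) (simp_all add: Ad_def)

lemma ip_cofactor_left: "k \<le> d \<Longrightarrow> Ad q \<Longrightarrow> ip (cofactor k) q = cnj (coord q k) * ip (cofactor k) (cofactor k)"
proof -
  assume k: "k \<le> d" and q: "Ad q"
  have "ip (cofactor k) q = (\<Sum>j<Suc d. ip (cofactor k) (smult (coord q j) (cofactor j)))"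
    using k Ad_cofactor by (subst cofactor_expansion[OF q], intro ip_sum_right) simp_all
  also have "\<dots> = (\<Sum>j<Suc d. cnj (coord q j) * ip (cofactor k) (cofactor j))"
    using k Ad_cofactor by (intro sum.cong) simp_all
  also have "\<dots> = cnj (coord q k) * ip (cofactor k) (cofactor k)"
    using k ip_cofactors_orthogonal[of k]
    by (subst sum.remove[of _ k]) (auto intro!: sum.neutral)
  finally show ?thesis .
qed

definition weight :: "nat \<Rightarrow> real" where
  "weight k = Re (ip (cofactor k) (cofactor k)) / (cmod (poly (cofactor k) (root k)))^2"

lemma weight_pos: "k \<le> d \<Longrightarrow> 0 < weight k"
  unfolding weight_def using ip_self_pos[OF Ad_cofactor] poly_cofactor_root_nonzero
    node_cofactor_nonzero[of "{..<Suc d}"] by (intro divide_pos_pos) auto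

lemma coord_mult_ip_cofactor: "k \<le> d \<Longrightarrow>
    coord p k * cnj (coord q k) * ip (cofactor k) (cofactor k) =
    of_real (weight k) * poly p (root k) * cnj (poly q (root k))"
proof -
  assume k: "k \<le> d"
  have "ip (cofactor k) (cofactor k) = of_real (Re (ip (cofactor k) (cofactor k)))"
    using ip_self_real Ad_cofactor[OF k] by simp
  moreover have "poly (cofactor k) (root k) * cnj (poly (cofactor k) (root k)) =
      of_real ((cmod (poly (cofactor k) (root k)))^2)"
    using complex_norm_square by simp
  ultimately show ?thesis
    by (simp add: coord_def weight_def field_simps)
qed

lemma ip_eq_quadrature_Ad: "Ad p \<Longrightarrow> Ad q \<Longrightarrow>
    ip p q = (\<Sum>k<Suc d. of_real (weight k) * poly p (root k) * cnj (poly q (root k)))"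
proof -
  assume p: "Ad p" and q: "Ad q"
  have "ip p q = (\<Sum>k<Suc d. ip (smult (coord p k) (cofactor k)) q)"
    using Ad_cofactor q by (subst cofactor_expansion[OF p], intro ip_sum_left) simp_all
  also have "\<dots> = (\<Sum>k<Suc d. coord p k * ip (cofactor k) q)"
    using Ad_cofactor q by (intro sum.cong) simp_all
  also have "\<dots> = (\<Sum>k<Suc d. of_real (weight k) * poly p (root k) * cnj (poly q (root k)))"
    using q by (intro sum.cong) (simp_all add: ip_cofactor_left coord_mult_ip_cofactor[symmetric])
  finally show ?thesis .
qed

text \<open>Subtracting a multiple of \<open>orth_poly\<close> reduces \<open>p\<close> to \<open>A\<^sub>d\<close> without changing
  either side.\<close>
lemma is_quadrature_roots: "is_quadrature (Suc d) root weight"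
  unfolding is_quadrature_def
proof (intro conjI allI impI)
  show "0 < weight k" if "k < Suc d" for k using that weight_pos by simp
  fix p q assume p: "Ad1 p" and q: "Ad q"
  define p' where "p' = p - smult (coeff p (Suc d)) orth_poly"
  have "Ad p'"
    unfolding p'_def Ad_def using p Ad1_orth_poly coeff_orth_poly
    by (intro degree_diff_smult_monic_le) (simp_all add: Ad1_def)
  have "ip p q = ip p' q"
    using p q Ad1_orth_poly ip_orth_poly_eq_0[OF q] by (simp add: p'_def)
  moreover have "poly p (root k) = poly p' (root k)" if "k < Suc d" for k
    using that poly_orth_poly_root by (simp add: p'_def)
  ultimately show "ip p q = (\<Sum>k<Suc d. of_real (weight k) * poly p (root k) * cnj (poly q (root k)))"
    using ip_eq_quadrature_Ad[OF \<open>Ad p'\<close> q] by simp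
qed

end

context nonneg_sigma
begin

lemma ex_quadrature: "\<exists>a c. is_quadrature (Suc d) a c"
proof -
  obtain root where "smult (lead_coeff orth_poly) (\<Prod>i<degree orth_poly. [:- root i, 1:]) = orth_poly"
    using complex_poly_decompose' by blast
  then have "orth_poly = (\<Prod>i<Suc d. [:- root i, 1:])"
    using degree_orth_poly coeff_orth_poly by simp
  then interpret orth_poly_roots d L root
    by unfold_locales
  show ?thesis using is_quadrature_roots by blast
qed

end

context hermitian_functional
begin

lemma ex_quadrature_iff_sigmaM_nonneg:
  "(\<exists>N \<le> Suc d. \<exists>a c. is_quadrature N a c) \<longleftrightarrow> (\<forall>p q. Ad p \<longrightarrow> Ad q \<longrightarrow> 0 \<le> sigmaM L d p q)"
proof
  assume "\<exists>N \<le> Suc d. \<exists>a c. is_quadrature N a c"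
  then obtain N a c where "N \<le> Suc d" "is_quadrature N a c" by blast
  then interpret quadrature_rule d L N a c
    by unfold_locales
  show "\<forall>p q. Ad p \<longrightarrow> Ad q \<longrightarrow> 0 \<le> sigmaM L d p q"
    using sigmaM_nonneg by blast
next
  assume "\<forall>p q. Ad p \<longrightarrow> Ad q \<longrightarrow> 0 \<le> sigmaM L d p q"
  then interpret nonneg_sigma d L
    by unfold_locales blast
  show "\<exists>N \<le> Suc d. \<exists>a c. is_quadrature N a c"
    using ex_quadrature by blast
qed

end

theorem theorem3:
  fixes d :: nat and L :: "bpoly \<Rightarrow> complex"
  assumes lin: "lin_functional (2*d+2) L"
    and real: "real_functional (2*d+2) L"
    and nonneg: "\<And>f. in_bdeg (d+1) f \<Longrightarrow>
                   L (bmult f (bconj f)) \<in> \<real> \<and> Re (L (bmult f (bconj f))) \<ge> 0"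
    and strict: "\<And>p. p \<noteq> 0 \<Longrightarrow> degree p \<le> d \<Longrightarrow>
                   L (hprod p p) \<in> \<real> \<and> Re (L (hprod p p)) > 0"
  shows "(\<exists>N::nat. N \<le> d + 1 \<and> (\<exists>(a::nat \<Rightarrow> complex) (c::nat \<Rightarrow> real).
             (\<forall>k<N. c k > 0) \<and>
             (\<forall>p q. degree p \<le> d + 1 \<longrightarrow> degree q \<le> d + 1 \<longrightarrow>
                    degree p + degree q \<le> 2*d+1 \<longrightarrow>
                    L (hprod p q) = (\<Sum>k<N. of_real (c k) * poly p (a k) * cnj (poly q (a k))))))
     \<longleftrightarrow> (\<forall>p q. degree p \<le> d \<longrightarrow> degree q \<le> d \<longrightarrow> sigmaM L d p q \<ge> 0)"
proof -
  interpret hermitian_functional d L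
    using lin real strict by unfold_locales
  show ?thesis
    using ex_quadrature_iff_sigmaM_nonneg unfolding is_quadrature_iff Ad_def by simp
qed

end
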